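(* Let $g,r,d$ and ramification sequences $\alpha,\beta$ satisfy $\rho(g,r,d,\alpha,\beta)=0$. If $r\ge2$ and $\alpha_r+\beta_r+g-d+r>r+1$, then there is a non-identity element of the EH group (one of the generators $\pi_{t,a}$) which moves at most $\tfrac14$ of the elements of $YT(g,r,d,\alpha,\beta)$.
   Context: Ramification sequences: $\alpha=(\alpha_0,\dots,\alpha_r)$ integers with $d-r\ge\alpha_0\ge\cdots\ge\alpha_r\ge0$, $|\alpha|=\sum\alpha_i$; $g-d+r\ge0$; $\rho(g,r,d,\alpha,\beta)=g-(r+1)(g-d+r)-|\alpha|-|\beta|$. Skew diagram $\sigma(g,r,d,\alpha,\beta)$ (with $m=g-d+r$): rows $k=1,\dots,r+1$ numbered top to bottom, row $k$ consisting of boxes $(k,c)$ with $\alpha_0-\alpha_{r+1-k}<c\le\alpha_0+m+\beta_{k-1}$ (columns numbered left to right); it has $g$ boxes when $\rho=0$. $YT(g,r,d,\alpha,\beta)$ is the set of standard Young tableaux of this shape: bijective fillings with $1,\dots,g$ strictly increasing along rows (left to right) and columns (top to bottom). The distance between boxes $(i,j),(i',j')$ is $|i-i'|+|j-j'|$. For $1\le t<g$ and $a>0$, $\pi_{t,a}$ is the permutation of $YT(g,r,d,\alpha,\beta)$ exchanging the entries $t$ and $t+1$ in every tableau where they lie in different rows and different columns at distance exactly $a$, and fixing all other tableaux. The EH group is the subgroup of the symmetric group on $YT(g,r,d,\alpha,\beta)$ generated by all $\pi_{t,a}$. An element moves a tableau if it does not fix it. *)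

theory Defs
  imports Main
begin

type_synonym box = "nat \<times> int"
type_synonym tableau = "box \<Rightarrow> nat"

definition is_ram_seq :: "nat \<Rightarrow> nat \<Rightarrow> (nat \<Rightarrow> nat) \<Rightarrow> bool" where
  "is_ram_seq r d \<alpha> \<longleftrightarrow>
     int (\<alpha> 0) \<le> int d - int r \<and> (\<forall>i<r. \<alpha> (Suc i) \<le> \<alpha> i)"

definition rho :: "nat \<Rightarrow> nat \<Rightarrow> nat \<Rightarrow> (nat \<Rightarrow> nat) \<Rightarrow> (nat \<Rightarrow> nat) \<Rightarrow> int" where
  "rho g r d \<alpha> \<beta> = int g - (int r + 1) * (int g - int d + int r)
      - int (\<Sum>i\<le>r. \<alpha> i) - int (\<Sum>i\<le>r. \<beta> i)"

definition skew :: "nat \<Rightarrow> nat \<Rightarrow> nat \<Rightarrow> (nat \<Rightarrow> nat) \<Rightarrow> (nat \<Rightarrow> nat) \<Rightarrow> box set" where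
  "skew g r d \<alpha> \<beta> = {(k, c). 1 \<le> k \<and> k \<le> r + 1 \<and>
      int (\<alpha> 0) - int (\<alpha> (r + 1 - k)) < c \<and>
      c \<le> int (\<alpha> 0) + (int g - int d + int r) + int (\<beta> (k - 1))}"

definition YT :: "nat \<Rightarrow> nat \<Rightarrow> nat \<Rightarrow> (nat \<Rightarrow> nat) \<Rightarrow> (nat \<Rightarrow> nat) \<Rightarrow> tableau set" where
  "YT g r d \<alpha> \<beta> = {T. let S = skew g r d \<alpha> \<beta> in
      bij_betw T S {1..g} \<and> (\<forall>x. x \<notin> S \<longrightarrow> T x = 0) \<and>
      (\<forall>i j j'. (i, j) \<in> S \<longrightarrow> (i, j') \<in> S \<longrightarrow> j < j' \<longrightarrow> T (i, j) < T (i, j')) \<and>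
      (\<forall>i i' j. (i, j) \<in> S \<longrightarrow> (i', j) \<in> S \<longrightarrow> i < i' \<longrightarrow> T (i, j) < T (i', j))}"

definition box_dist :: "box \<Rightarrow> box \<Rightarrow> int" where
  "box_dist p q = \<bar>int (fst p) - int (fst q)\<bar> + \<bar>snd p - snd q\<bar>"

definition pi_ta :: "nat \<Rightarrow> int \<Rightarrow> tableau \<Rightarrow> tableau" where
  "pi_ta t a T = (if (\<exists>p q. T p = t \<and> T q = t + 1 \<and> fst p \<noteq> fst q \<and> snd p \<noteq> snd q
                          \<and> box_dist p q = a)
     then (\<lambda>x. if T x = t then t + 1 else if T x = t + 1 then t else T x) else T)"

text \<open>EH group: generated by the pi_{t,a} (1 <= t < g, a > 0). As the ambient group is finite,
  the generated subgroup is the closure of the identity under composition with generators.\<close>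
inductive_set EH_group :: "nat \<Rightarrow> (tableau \<Rightarrow> tableau) set" for g :: nat where
  EH_id: "id \<in> EH_group g"
| EH_step: "\<sigma> \<in> EH_group g \<Longrightarrow> 1 \<le> t \<Longrightarrow> t < g \<Longrightarrow> a > 0 \<Longrightarrow> pi_ta t a \<circ> \<sigma> \<in> EH_group g"

end

theory Submission
  imports Defs "HOL-Library.Product_Lexorder" "HOL-Library.Disjoint_Sets"
begin

text \<open>A generator \<open>\<pi>(t, a)\<close> moves a tableau only if the entries t and t + 1 lie at distance a.
  Hence generators with the same t and different a move disjoint sets of tableaux, and so do
  generators \<open>\<pi>(t, D)\<close> with different t, where D is the distance between the top-right box P
  and the bottom-left box Q: two boxes of the shape at distance D are opposite corners, and
  the entries in the corners (1, 1) and (r + 1, end of row 1) differ by at least 2, so the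
  moved tableaux have t, t + 1 in P, Q. By pigeonhole it suffices to find four such generators,
  each moving some tableau. Filling first an order ideal that leaves P and Q addable, then P and
  Q, then the rest, puts consecutive entries into P and Q; growing the ideal along the second
  row yields four values of t. This only fails for the 3 \<times> 4 rectangle, where t = 5 and four
  explicit tableaux with 5 and 6 at distances 5, 4, 3, 2 do the job.\<close>

lemma ram_seq_antimono:
  assumes "is_ram_seq r d f" and "i \<le> j" and "j \<le> r"
  shows "f j \<le> f i"
  using assms(2,3)
proof (induction j rule: dec_induct)
  case base
  then show ?case by simp
next
  case (step n)
  then have "f (Suc n) \<le> f n"
    using assms(1) unfolding is_ram_seq_def by simp
  with step show ?case by simp
qed

definition rank_in :: "'a set \<Rightarrow> ('a \<Rightarrow> 'k::linorder) \<Rightarrow> 'a \<Rightarrow> nat" where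
  "rank_in S key x = (if x \<in> S then card {y \<in> S. key y \<le> key x} else 0)"

lemma rank_in_less:
  assumes "finite S" and "x \<in> S" and "y \<in> S" and "key x < key y"
  shows "rank_in S key x < rank_in S key y"
proof -
  have "{z \<in> S. key z \<le> key x} \<subseteq> {z \<in> S. key z \<le> key y}"
    using assms(4) by auto
  moreover have "y \<in> {z \<in> S. key z \<le> key y} - {z \<in> S. key z \<le> key x}"
    using assms(3,4) by auto
  ultimately have "{z \<in> S. key z \<le> key x} \<subset> {z \<in> S. key z \<le> key y}"
    by blast
  then show ?thesis
    using assms by (simp add: rank_in_def psubset_card_mono)
qed

lemma bij_betw_rank_in:
  assumes "finite S" and "inj_on key S"
  shows "bij_betw (rank_in S key) S {1..card S}"
proof -
  have inj: "inj_on (rank_in S key) S"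
  proof (rule inj_onI)
    fix x y
    assume xy: "x \<in> S" "y \<in> S" "rank_in S key x = rank_in S key y"
    then have "key x = key y"
      using rank_in_less[OF assms(1)] by (metis less_irrefl neqE)
    then show "x = y"
      using assms(2) xy by (simp add: inj_on_eq_iff)
  qed
  have "rank_in S key ` S \<subseteq> {1..card S}"
  proof
    fix z
    assume "z \<in> rank_in S key ` S"
    then obtain x where x: "x \<in> S" "z = rank_in S key x" by auto
    have "0 < card {y \<in> S. key y \<le> key x}"
      using x(1) assms(1) by (auto simp: card_gt_0_iff)
    moreover have "card {y \<in> S. key y \<le> key x} \<le> card S"
      using assms(1) by (simp add: card_mono)
    ultimately show "z \<in> {1..card S}"
      using x by (simp add: rank_in_def)
  qed
  moreover have "card (rank_in S key ` S) = card {1..card S}"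
    using inj by (simp add: card_image)
  ultimately have "rank_in S key ` S = {1..card S}"
    by (simp add: card_subset_eq)
  with inj show ?thesis by (simp add: bij_betw_def)
qed

lemma disjoint_family_small_member:
  fixes A :: "nat \<Rightarrow> 'a set"
  assumes "finite Y" and "0 < n" and "\<And>i. i < n \<Longrightarrow> A i \<subseteq> Y"
    and "disjoint_family_on A {..<n}"
  shows "\<exists>i<n. n * card (A i) \<le> card Y"
proof (rule ccontr)
  assume "\<not> ?thesis"
  then have large: "\<And>i. i < n \<Longrightarrow> card Y < n * card (A i)" by auto
  have "(\<Sum>i<n. card (A i)) = card (\<Union>i<n. A i)"
    using assms by (intro card_UN_disjoint[symmetric])
      (auto simp: disjoint_family_on_def intro: finite_subset)
  also have "\<dots> \<le> card Y"
    using assms by (intro card_mono) auto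
  finally have "n * (\<Sum>i<n. card (A i)) \<le> n * card Y" by simp
  moreover have "(\<Sum>i<n. card Y) < (\<Sum>i<n. n * card (A i))"
    using assms(2) large by (intro sum_strict_mono) auto
  ultimately show False by (simp add: sum_distrib_left)
qed

lemma pi_ta_moves_iff:
  "pi_ta t a T \<noteq> T \<longleftrightarrow>
     (\<exists>p q. T p = t \<and> T q = t + 1 \<and> fst p \<noteq> fst q \<and> snd p \<noteq> snd q \<and> box_dist p q = a)"
proof
  assume "pi_ta t a T \<noteq> T"
  then show "\<exists>p q. T p = t \<and> T q = t + 1 \<and> fst p \<noteq> fst q \<and> snd p \<noteq> snd q \<and> box_dist p q = a"
    unfolding pi_ta_def by (auto split: if_splits)
next
  assume swap: "\<exists>p q. T p = t \<and> T q = t + 1 \<and> fst p \<noteq> fst q \<and> snd p \<noteq> snd q \<and> box_dist p q = a"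
  then obtain p where p: "T p = t" by blast
  then have "pi_ta t a T p = t + 1"
    using swap unfolding pi_ta_def by simp
  with p show "pi_ta t a T \<noteq> T" by auto
qed

lemma pi_ta_in_EH_group: "1 \<le> t \<Longrightarrow> t < g \<Longrightarrow> 0 < a \<Longrightarrow> pi_ta t a \<in> EH_group g"
  using EH_group.EH_step[OF EH_group.EH_id] by simp

lemma YT_D:
  assumes "T \<in> YT g r d \<alpha> \<beta>"
  shows "bij_betw T (skew g r d \<alpha> \<beta>) {1..g}"
    and "\<And>x. x \<notin> skew g r d \<alpha> \<beta> \<Longrightarrow> T x = 0"
    and "\<And>i j j'. (i, j) \<in> skew g r d \<alpha> \<beta> \<Longrightarrow> (i, j') \<in> skew g r d \<alpha> \<beta> \<Longrightarrow> j < j'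
           \<Longrightarrow> T (i, j) < T (i, j')"
    and "\<And>i i' j. (i, j) \<in> skew g r d \<alpha> \<beta> \<Longrightarrow> (i', j) \<in> skew g r d \<alpha> \<beta> \<Longrightarrow> i < i'
           \<Longrightarrow> T (i, j) < T (i', j)"
  using assms unfolding YT_def Let_def by auto

lemma finite_YT:
  assumes "finite (skew g r d \<alpha> \<beta>)"
  shows "finite (YT g r d \<alpha> \<beta>)"
proof (rule finite_subset)
  show "YT g r d \<alpha> \<beta> \<subseteq>
      {T. \<forall>x. (x \<in> skew g r d \<alpha> \<beta> \<longrightarrow> T x \<in> {1..g}) \<and> (x \<notin> skew g r d \<alpha> \<beta> \<longrightarrow> T x = 0)}"
    using YT_D(1,2) bij_betwE by blast
  show "finite {T. \<forall>x. (x \<in> skew g r d \<alpha> \<beta> \<longrightarrow> T x \<in> {1..g}) \<and> (x \<notin> skew g r d \<alpha> \<beta> \<longrightarrow> T x = 0)}"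
    using assms by (intro finite_set_of_finite_funs) auto
qed

lemma YT_entry_inj:
  assumes "T \<in> YT g r d \<alpha> \<beta>" and "T p = T q" and "0 < T p"
  shows "p = q"
proof -
  have "p \<in> skew g r d \<alpha> \<beta>" "q \<in> skew g r d \<alpha> \<beta>"
    using YT_D(2)[OF assms(1)] assms(2,3) by (metis less_irrefl)+
  then show ?thesis
    using YT_D(1)[OF assms(1)] assms(2) by (meson bij_betw_imp_inj_on inj_onD)
qed

lemma pi_ta_moves_same_entry_eq_dist:
  assumes "T \<in> YT g r d \<alpha> \<beta>" and "0 < t"
    and "pi_ta t a T \<noteq> T" and "pi_ta t a' T \<noteq> T"
  shows "a = a'"
proof -
  obtain p q where pq: "T p = t" "T q = t + 1" "box_dist p q = a"
    using assms(3) unfolding pi_ta_moves_iff by blast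
  obtain p' q' where pq': "T p' = t" "T q' = t + 1" "box_dist p' q' = a'"
    using assms(4) unfolding pi_ta_moves_iff by blast
  have "p = p'" "q = q'"
    using YT_entry_inj[OF assms(1)] pq pq' assms(2) by simp_all
  with pq pq' show ?thesis by simp
qed

lemma quarter_moving_generator:
  fixes t :: "nat \<Rightarrow> nat" and a :: "nat \<Rightarrow> int"
  assumes "finite (YT g r d \<alpha> \<beta>)"
    and "\<And>i. i < 4 \<Longrightarrow> 1 \<le> t i \<and> t i < g \<and> 0 < a i"
    and "\<And>i. i < 4 \<Longrightarrow> \<exists>T \<in> YT g r d \<alpha> \<beta>. pi_ta (t i) (a i) T \<noteq> T"
    and "\<And>i j T. i < 4 \<Longrightarrow> j < 4 \<Longrightarrow> T \<in> YT g r d \<alpha> \<beta> \<Longrightarrow>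
           pi_ta (t i) (a i) T \<noteq> T \<Longrightarrow> pi_ta (t j) (a j) T \<noteq> T \<Longrightarrow> i = j"
  shows "\<exists>t a. 1 \<le> t \<and> t < g \<and> a > 0 \<and> pi_ta t a \<in> EH_group g \<and>
           (\<exists>T \<in> YT g r d \<alpha> \<beta>. pi_ta t a T \<noteq> T) \<and>
           4 * card {T \<in> YT g r d \<alpha> \<beta>. pi_ta t a T \<noteq> T} \<le> card (YT g r d \<alpha> \<beta>)"
proof -
  let ?moved = "\<lambda>i. {T \<in> YT g r d \<alpha> \<beta>. pi_ta (t i) (a i) T \<noteq> T}"
  have "disjoint_family_on ?moved {..<4}"
    using assms(4) by (auto simp: disjoint_family_on_def)
  then have "\<exists>i<4. 4 * card (?moved i) \<le> card (YT g r d \<alpha> \<beta>)"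
    by (intro disjoint_family_small_member[OF assms(1)]) auto
  then obtain i where i: "i < 4" and small: "4 * card (?moved i) \<le> card (YT g r d \<alpha> \<beta>)"
    by blast
  show ?thesis
    using assms(2,3)[OF i] small pi_ta_in_EH_group[of "t i" g "a i"]
    by (intro exI[of _ "t i"] exI[of _ "a i"]) simp
qed

definition rectangle_3x4 :: "box set" where
  "rectangle_3x4 = {1, 2, 3} \<times> {1, 2, 3, 4}"

definition tableau_of_rows :: "nat list list \<Rightarrow> tableau" where
  "tableau_of_rows xs = (\<lambda>(k, c). if (k, c) \<in> rectangle_3x4 then xs ! (k - 1) ! (nat c - 1) else 0)"

text \<open>In \<open>rectangle_witness i\<close> the entries 5 and 6 lie in different rows and columns at
  distance 5 - i.\<close>

definition rectangle_witness :: "nat \<Rightarrow> nat list list" where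
  "rectangle_witness i =
     [[[1,2,3,6], [4,7,8,9], [5,10,11,12]], [[1,2,5,7], [3,4,8,9], [6,10,11,12]],
      [[1,2,3,5], [4,6,7,8], [9,10,11,12]], [[1,2,5,7], [3,6,8,9], [4,10,11,12]]] ! i"

lemma rectangle_3x4_eq:
  "rectangle_3x4 = {(1,1), (1,2), (1,3), (1,4), (2,1), (2,2), (2,3), (2,4), (3,1), (3,2), (3,3), (3,4)}"
  unfolding rectangle_3x4_def by auto

lemma less_4_cases: "(i::nat) < 4 \<longleftrightarrow> i = 0 \<or> i = 1 \<or> i = 2 \<or> i = 3"
  by auto

lemma rectangle_witness_in_YT:
  assumes "skew g r d \<alpha> \<beta> = rectangle_3x4" and "g = 12" and "n < 4"
  shows "tableau_of_rows (rectangle_witness n) \<in> YT g r d \<alpha> \<beta>"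
proof -
  let ?T = "tableau_of_rows (rectangle_witness n)"
  have upto_12: "{1..12::nat} = {1,2,3,4,5,6,7,8,9,10,11,12}" by (auto; presburger)
  have "?T ` rectangle_3x4 = {1..12}" "inj_on ?T rectangle_3x4"
    using assms(3) unfolding less_4_cases upto_12 inj_on_def
    by (auto simp: tableau_of_rows_def rectangle_witness_def rectangle_3x4_eq)
  moreover have "\<forall>i j j'. (i, j) \<in> rectangle_3x4 \<longrightarrow> (i, j') \<in> rectangle_3x4 \<longrightarrow> j < j'
      \<longrightarrow> ?T (i, j) < ?T (i, j')"
    using assms(3) unfolding less_4_cases
    by (auto simp: tableau_of_rows_def rectangle_witness_def rectangle_3x4_eq)
  moreover have "\<forall>i i' j. (i, j) \<in> rectangle_3x4 \<longrightarrow> (i', j) \<in> rectangle_3x4 \<longrightarrow> i < i'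
      \<longrightarrow> ?T (i, j) < ?T (i', j)"
    using assms(3) unfolding less_4_cases
    by (auto simp: tableau_of_rows_def rectangle_witness_def rectangle_3x4_eq)
  ultimately show ?thesis
    using assms(1,2) unfolding YT_def Let_def bij_betw_def by (simp add: tableau_of_rows_def)
qed

lemma rectangle_witness_moved:
  assumes "n < 4"
  shows "pi_ta 5 (5 - int n) (tableau_of_rows (rectangle_witness n)) \<noteq> tableau_of_rows (rectangle_witness n)"
  using assms unfolding less_4_cases pi_ta_moves_iff
  apply (elim disjE)
  subgoal by (intro exI[of _ "(3, 1)"] exI[of _ "(1, 4)"])
      (simp add: tableau_of_rows_def rectangle_witness_def rectangle_3x4_def box_dist_def)
  subgoal by (intro exI[of _ "(1, 3)"] exI[of _ "(3, 1)"])
      (simp add: tableau_of_rows_def rectangle_witness_def rectangle_3x4_def box_dist_def)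
  subgoal by (intro exI[of _ "(1, 4)"] exI[of _ "(2, 2)"])
      (simp add: tableau_of_rows_def rectangle_witness_def rectangle_3x4_def box_dist_def)
  subgoal by (intro exI[of _ "(1, 3)"] exI[of _ "(2, 2)"])
      (simp add: tableau_of_rows_def rectangle_witness_def rectangle_3x4_def box_dist_def)
  done

lemma quarter_moving_generator_rectangle:
  assumes "skew g r d \<alpha> \<beta> = rectangle_3x4" and "g = 12"
  shows "\<exists>t a. 1 \<le> t \<and> t < g \<and> a > 0 \<and> pi_ta t a \<in> EH_group g \<and>
           (\<exists>T \<in> YT g r d \<alpha> \<beta>. pi_ta t a T \<noteq> T) \<and>
           4 * card {T \<in> YT g r d \<alpha> \<beta>. pi_ta t a T \<noteq> T} \<le> card (YT g r d \<alpha> \<beta>)"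
proof (rule quarter_moving_generator[where t = "\<lambda>_. 5" and a = "\<lambda>i. 5 - int i"])
  show "finite (YT g r d \<alpha> \<beta>)"
    using assms(1) by (intro finite_YT) (simp add: rectangle_3x4_def)
  show "1 \<le> (5::nat) \<and> 5 < g \<and> 0 < 5 - int i" if "i < 4" for i
    using that assms(2) by simp
  show "\<exists>T \<in> YT g r d \<alpha> \<beta>. pi_ta 5 (5 - int i) T \<noteq> T" if "i < 4" for i
    using rectangle_witness_in_YT[OF assms that] rectangle_witness_moved[OF that] by blast
  show "i = j" if "i < 4" "j < 4" "T \<in> YT g r d \<alpha> \<beta>"
    and "pi_ta 5 (5 - int i) T \<noteq> T" "pi_ta 5 (5 - int j) T \<noteq> T" for i j T
    using pi_ta_moves_same_entry_eq_dist[OF that(3) _ that(4,5)] by simp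
qed

locale EH_shape =
  fixes g r d :: nat and \<alpha> \<beta> :: "nat \<Rightarrow> nat"
  assumes ram_\<alpha>: "is_ram_seq r d \<alpha>" and ram_\<beta>: "is_ram_seq r d \<beta>"
    and rho_zero: "rho g r d \<alpha> \<beta> = 0"
    and r_ge_2: "2 \<le> r"
    and last_ram_bound: "int (\<alpha> r) + int (\<beta> r) + int g - int d + int r > int r + 1"
begin

abbreviation shape :: "box set" where
  "shape \<equiv> skew g r d \<alpha> \<beta>"

definition row_lo :: "nat \<Rightarrow> int" where
  "row_lo k = int (\<alpha> 0) - int (\<alpha> (r + 1 - k))"

definition row_hi :: "nat \<Rightarrow> int" where
  "row_hi k = int (\<alpha> 0) + (int g - int d + int r) + int (\<beta> (k - 1))"

lemma shape_eq: "shape = {(k, c). 1 \<le> k \<and> k \<le> r + 1 \<and> row_lo k < c \<and> c \<le> row_hi k}"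
  unfolding skew_def row_lo_def row_hi_def by simp

lemma row_length:
  assumes "1 \<le> k" and "k \<le> r + 1"
  shows "int r + 2 \<le> row_hi k - row_lo k"
proof -
  have "\<alpha> r \<le> \<alpha> (r + 1 - k)" "\<beta> r \<le> \<beta> (k - 1)"
    using assms ram_seq_antimono[OF ram_\<alpha>] ram_seq_antimono[OF ram_\<beta>] by simp_all
  then show ?thesis
    using last_ram_bound unfolding row_lo_def row_hi_def by linarith
qed

lemma row_lo_nonneg: "1 \<le> k \<Longrightarrow> 0 \<le> row_lo k"
  unfolding row_lo_def using ram_seq_antimono[OF ram_\<alpha>, of 0 "r + 1 - k"] by simp

lemma row_lo_last: "row_lo (r + 1) = 0"
  unfolding row_lo_def by simp

lemma row_hi_le_first: "1 \<le> k \<Longrightarrow> k \<le> r + 1 \<Longrightarrow> row_hi k \<le> row_hi 1"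
  unfolding row_hi_def using ram_seq_antimono[OF ram_\<beta>, of 0 "k - 1"] by simp

lemma shape_box_bounds:
  assumes "(k, c) \<in> shape"
  shows "1 \<le> k" and "k \<le> r + 1" and "1 \<le> c" and "c \<le> row_hi 1"
  using assms row_lo_nonneg[of k] row_hi_le_first[of k] unfolding shape_eq by auto

lemma shape_rows: "shape = (\<Union>k\<in>{1..r+1}. {k} \<times> {row_lo k<..row_hi k})"
  unfolding shape_eq by auto

lemma finite_shape: "finite shape"
  unfolding shape_rows by auto

lemma card_shape: "card shape = g"
proof -
  have "card shape = (\<Sum>k\<in>{1..r+1}. nat (row_hi k - row_lo k))"
    unfolding shape_rows by (subst card_UN_disjoint) (auto simp: card_cartesian_product_singleton)
  then have "int (card shape) = (\<Sum>k\<in>{1..r+1}. int (nat (row_hi k - row_lo k)))"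
    by simp
  also have "\<dots> = (\<Sum>k\<in>{1..r+1}. row_hi k - row_lo k)"
    by (rule sum.cong) (use row_length in force)+
  also have "\<dots> = (\<Sum>k\<in>{1..r+1}. (int g - int d + int r) + int (\<beta> (k - 1)) + int (\<alpha> (r + 1 - k)))"
    unfolding row_hi_def row_lo_def by (simp add: algebra_simps)
  also have "\<dots> = (int r + 1) * (int g - int d + int r)
      + (\<Sum>k\<in>{1..r+1}. int (\<beta> (k - 1))) + (\<Sum>k\<in>{1..r+1}. int (\<alpha> (r + 1 - k)))"
    by (simp add: sum.distrib)
  also have "(\<Sum>k\<in>{1..r+1}. int (\<beta> (k - 1))) = (\<Sum>i\<le>r. int (\<beta> i))"
    by (rule sum.reindex_bij_witness[of _ "\<lambda>i. i + 1" "\<lambda>k. k - 1"]) auto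
  also have "(\<Sum>k\<in>{1..r+1}. int (\<alpha> (r + 1 - k))) = (\<Sum>i\<le>r. int (\<alpha> i))"
    by (rule sum.reindex_bij_witness[of _ "\<lambda>i. r + 1 - i" "\<lambda>k. r + 1 - k"]) auto
  finally show ?thesis
    using rho_zero unfolding rho_def by simp
qed

lemma rank_by_blocks_in_YT:
  fixes block :: "box \<Rightarrow> nat"
  assumes "\<And>i j j'. (i, j) \<in> shape \<Longrightarrow> (i, j') \<in> shape \<Longrightarrow> j < j' \<Longrightarrow> block (i, j) \<le> block (i, j')"
    and "\<And>i i' j. (i, j) \<in> shape \<Longrightarrow> (i', j) \<in> shape \<Longrightarrow> i < i' \<Longrightarrow> block (i, j) \<le> block (i', j)"
  shows "rank_in shape (\<lambda>x. (block x, x)) \<in> YT g r d \<alpha> \<beta>"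
proof -
  let ?key = "\<lambda>x. (block x, x)"
  have "bij_betw (rank_in shape ?key) shape {1..g}"
    using bij_betw_rank_in[OF finite_shape, of ?key] card_shape by (simp add: inj_on_def)
  moreover have "rank_in shape ?key (i, j) < rank_in shape ?key (i, j')"
    if "(i, j) \<in> shape" "(i, j') \<in> shape" "j < j'" for i j j'
    using assms(1)[OF that] that by (intro rank_in_less[OF finite_shape]) (simp_all add: le_less)
  moreover have "rank_in shape ?key (i, j) < rank_in shape ?key (i', j)"
    if "(i, j) \<in> shape" "(i', j) \<in> shape" "i < i'" for i i' j
    using assms(2)[OF that] that by (intro rank_in_less[OF finite_shape]) (simp_all add: le_less)
  ultimately show ?thesis
    unfolding YT_def Let_def by (simp add: rank_in_def[of _ _ x for x])
qed

abbreviation top_right :: box where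
  "top_right \<equiv> (1, row_hi 1)"

abbreviation bottom_left :: box where
  "bottom_left \<equiv> (r + 1, 1)"

definition diam :: int where
  "diam = int r + row_hi 1 - 1"

lemma first_row_length: "4 \<le> row_hi 1"
  using row_length[of 1] row_lo_nonneg[of 1] r_ge_2 by simp

lemma top_right_in_shape: "top_right \<in> shape"
  using row_length[of 1] unfolding shape_eq by auto

lemma bottom_left_in_shape: "bottom_left \<in> shape"
  using row_length[of "r + 1"] row_lo_last unfolding shape_eq by auto

lemma boxes_at_diam:
  assumes "p \<in> shape" and "q \<in> shape" and "box_dist p q = diam"
  shows "(p, q) \<in> {(top_right, bottom_left), (bottom_left, top_right),
                    ((1, 1), (r + 1, row_hi 1)), ((r + 1, row_hi 1), (1, 1))}"
proof -
  obtain k c k' c' where p: "p = (k, c)" and q: "q = (k', c')" by fastforce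
  note bounds = shape_box_bounds[OF assms(1)[unfolded p]] shape_box_bounds[OF assms(2)[unfolded q]]
  have "\<bar>int k - int k'\<bar> + \<bar>c - c'\<bar> = int r + row_hi 1 - 1"
    using assms(3) unfolding p q box_dist_def diam_def by simp
  then have "\<bar>int k - int k'\<bar> = int r" and "\<bar>c - c'\<bar> = row_hi 1 - 1"
    using bounds by linarith+
  then have "k = 1 \<and> k' = r + 1 \<or> k = r + 1 \<and> k' = 1"
    and "c = 1 \<and> c' = row_hi 1 \<or> c = row_hi 1 \<and> c' = 1"
    using bounds by linarith+
  then show ?thesis unfolding p q by auto
qed

lemma opposite_corner_gap:
  assumes "T \<in> YT g r d \<alpha> \<beta>" and "(1, 1) \<in> shape" and "(r + 1, row_hi 1) \<in> shape"
  shows "T (1, 1) + 2 \<le> T (r + 1, row_hi 1)"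
proof -
  have "T (1, 1) < T top_right"
    using YT_D(3)[OF assms(1,2) top_right_in_shape] first_row_length by simp
  moreover have "T top_right < T (r + 1, row_hi 1)"
    using YT_D(4)[OF assms(1) top_right_in_shape assms(3)] r_ge_2 by simp
  ultimately show ?thesis by simp
qed

lemma pi_ta_diam_moves_corner_entry:
  assumes "T \<in> YT g r d \<alpha> \<beta>" and "0 < t" and "pi_ta t diam T \<noteq> T"
  shows "t = min (T top_right) (T bottom_left)"
proof -
  obtain p q where pq: "T p = t" "T q = t + 1" "box_dist p q = diam"
    using assms(3) unfolding pi_ta_moves_iff by blast
  have "p \<in> shape" "q \<in> shape"
    using YT_D(2)[OF assms(1)] pq(1,2) assms(2) by (metis less_irrefl, metis add_eq_0_iff_both_eq_0 one_neq_zero)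
  then have corners: "(p, q) \<in> {(top_right, bottom_left), (bottom_left, top_right),
                    ((1, 1), (r + 1, row_hi 1)), ((r + 1, row_hi 1), (1, 1))}"
    using pq(3) by (rule boxes_at_diam)
  show ?thesis
  proof (cases "(p, q) \<in> {((1, 1), (r + 1, row_hi 1)), ((r + 1, row_hi 1), (1, 1))}")
    case True
    then have "T (1, 1) + 2 \<le> T (r + 1, row_hi 1)"
      using opposite_corner_gap[OF assms(1)] \<open>p \<in> shape\<close> \<open>q \<in> shape\<close> by auto
    with True pq show ?thesis by auto
  next
    case False
    with corners pq show ?thesis by auto
  qed
qed

text \<open>For b below the end of the first row, \<open>corner_ideal b\<close> is an order ideal of the shape to
  which \<open>top_right\<close> and then \<open>bottom_left\<close> can be added.\<close>

definition corner_ideal :: "int \<Rightarrow> box set" where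
  "corner_ideal b = {x \<in> shape. (fst x = 1 \<and> snd x \<noteq> row_hi 1) \<or> (snd x = 1 \<and> fst x \<le> r)
                                \<or> (fst x = 2 \<and> snd x \<le> b)}"

definition corner_block :: "int \<Rightarrow> box \<Rightarrow> nat" where
  "corner_block b x =
     (if x \<in> corner_ideal b then 0 else if x = top_right then 1 else if x = bottom_left then 2 else 3)"

definition corner_tableau :: "int \<Rightarrow> tableau" where
  "corner_tableau b = rank_in shape (\<lambda>x. (corner_block b x, x))"

lemma finite_corner_ideal: "finite (corner_ideal b)"
  unfolding corner_ideal_def using finite_shape by simp

lemma corners_notin_corner_ideal: "top_right \<notin> corner_ideal b" "bottom_left \<notin> corner_ideal b"
  using first_row_length r_ge_2 by (auto simp: corner_ideal_def)

lemma corner_tableau_in_YT: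
  assumes "b < row_hi 1"
  shows "corner_tableau b \<in> YT g r d \<alpha> \<beta>"
  unfolding corner_tableau_def
proof (rule rank_by_blocks_in_YT)
  fix i j j' assume "(i, j) \<in> shape" "(i, j') \<in> shape" "j < j'"
  then show "corner_block b (i, j) \<le> corner_block b (i, j')"
    using shape_box_bounds[of i j] shape_box_bounds[of i j'] assms
    by (auto simp: corner_block_def corner_ideal_def)
next
  fix i i' j assume "(i, j) \<in> shape" "(i', j) \<in> shape" "i < i'"
  then show "corner_block b (i, j) \<le> corner_block b (i', j)"
    using shape_box_bounds[of i j] shape_box_bounds[of i' j] assms
    by (auto simp: corner_block_def corner_ideal_def)
qed

lemma corner_tableau_corners:
  "corner_tableau b top_right = card (corner_ideal b) + 1"
  "corner_tableau b bottom_left = card (corner_ideal b) + 2"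
proof -
  have "corner_ideal b \<subseteq> shape" by (auto simp: corner_ideal_def)
  then have "{y \<in> shape. (corner_block b y, y) \<le> (corner_block b top_right, top_right)}
      = insert top_right (corner_ideal b)"
    and "{y \<in> shape. (corner_block b y, y) \<le> (corner_block b bottom_left, bottom_left)}
      = insert bottom_left (insert top_right (corner_ideal b))"
    using top_right_in_shape bottom_left_in_shape corners_notin_corner_ideal
    by (auto simp: corner_block_def)
  moreover have "top_right \<noteq> bottom_left" using r_ge_2 by simp
  ultimately show "corner_tableau b top_right = card (corner_ideal b) + 1"
    and "corner_tableau b bottom_left = card (corner_ideal b) + 2"
    using top_right_in_shape bottom_left_in_shape corners_notin_corner_ideal finite_corner_ideal
    by (simp_all add: corner_tableau_def rank_in_def)
qed

lemma corner_tableau_moved: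
  "pi_ta (card (corner_ideal b) + 1) diam (corner_tableau b) \<noteq> corner_tableau b"
  unfolding pi_ta_moves_iff
proof (intro exI conjI)
  show "corner_tableau b top_right = card (corner_ideal b) + 1"
    and "corner_tableau b bottom_left = card (corner_ideal b) + 1 + 1"
    using corner_tableau_corners by simp_all
  show "fst top_right \<noteq> fst bottom_left" "snd top_right \<noteq> snd bottom_left"
    "box_dist top_right bottom_left = diam"
    using r_ge_2 first_row_length by (simp_all add: box_dist_def diam_def)
qed

definition row2_start :: int where
  "row2_start = max (row_lo 2 + 1) 2"

lemma card_corner_ideal_less:
  assumes "b < b'" and "row2_start \<le> b'" and "b' \<le> row2_start + 2"
  shows "card (corner_ideal b) < card (corner_ideal b')"
proof -
  have "(2, b') \<in> shape"
    using row_length[of 2] row_lo_nonneg[of 2] r_ge_2 assms(2,3)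
    unfolding shape_eq row2_start_def by auto
  then have "(2, b') \<in> corner_ideal b' - corner_ideal b"
    using assms(1,2) unfolding corner_ideal_def row2_start_def by auto
  moreover have "corner_ideal b \<subseteq> corner_ideal b'"
    using assms(1) unfolding corner_ideal_def by auto
  ultimately have "corner_ideal b \<subset> corner_ideal b'" by blast
  then show ?thesis using finite_corner_ideal by (simp add: psubset_card_mono)
qed

lemma quarter_moving_generator_generic:
  assumes "row2_start + 3 \<le> row_hi 1"
  shows "\<exists>t a. 1 \<le> t \<and> t < g \<and> a > 0 \<and> pi_ta t a \<in> EH_group g \<and>
           (\<exists>T \<in> YT g r d \<alpha> \<beta>. pi_ta t a T \<noteq> T) \<and>
           4 * card {T \<in> YT g r d \<alpha> \<beta>. pi_ta t a T \<noteq> T} \<le> card (YT g r d \<alpha> \<beta>)"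
proof -
  define b where "b i = row2_start - 1 + int i" for i :: nat
  define t where "t i = card (corner_ideal (b i)) + 1" for i :: nat
  have in_YT: "corner_tableau (b i) \<in> YT g r d \<alpha> \<beta>" if "i < 4" for i
    using that assms by (intro corner_tableau_in_YT) (simp add: b_def)
  have t_less: "t i < g" if "i < 4" for i
  proof -
    have "corner_tableau (b i) bottom_left \<in> {1..g}"
      using YT_D(1)[OF in_YT[OF that]] bottom_left_in_shape bij_betwE by blast
    then show ?thesis
      using corner_tableau_corners(2)[of "b i"] by (simp add: t_def)
  qed
  have t_less_t: "t i < t j" if "i < j" "j < 4" for i j
    using that unfolding t_def by (simp add: card_corner_ideal_less b_def)
  show ?thesis
  proof (rule quarter_moving_generator[where t = t and a = "\<lambda>_. diam"])
    show "finite (YT g r d \<alpha> \<beta>)"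
      using finite_shape by (rule finite_YT)
    show "1 \<le> t i \<and> t i < g \<and> 0 < diam" if "i < 4" for i
      using t_less[OF that] first_row_length by (simp add: t_def diam_def)
    show "\<exists>T \<in> YT g r d \<alpha> \<beta>. pi_ta (t i) diam T \<noteq> T" if "i < 4" for i
      using in_YT[OF that] corner_tableau_moved unfolding t_def by blast
    show "i = j" if "i < 4" "j < 4" "T \<in> YT g r d \<alpha> \<beta>"
      and "pi_ta (t i) diam T \<noteq> T" "pi_ta (t j) diam T \<noteq> T" for i j T
    proof -
      have "t i = min (T top_right) (T bottom_left)"
        using pi_ta_diam_moves_corner_entry[OF that(3) _ that(4)] by (simp add: t_def)
      moreover have "t j = min (T top_right) (T bottom_left)"
        using pi_ta_diam_moves_corner_entry[OF that(3) _ that(5)] by (simp add: t_def)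
      ultimately show ?thesis
        using that(1,2)
        by (metis less_irrefl linorder_neqE_nat t_less_t)
    qed
  qed
qed

lemma shape_is_rectangle:
  assumes "\<not> row2_start + 3 \<le> row_hi 1"
  shows "shape = rectangle_3x4" and "g = 12"
proof -
  have len2: "int r + 2 \<le> row_hi 2 - row_lo 2" and hi2: "row_hi 2 \<le> row_hi 1"
    using row_length[of 2] row_hi_le_first[of 2] r_ge_2 by simp_all
  have lo2: "row_lo 2 = 0"
  proof (rule ccontr)
    assume "row_lo 2 \<noteq> 0"
    then have "row2_start = row_lo 2 + 1"
      using row_lo_nonneg[of 2] unfolding row2_start_def by simp
    then show False
      using assms len2 hi2 r_ge_2 by linarith
  qed
  then have "row_hi 1 \<le> 4"
    using assms unfolding row2_start_def by simp
  then have "r = 2" "row_hi 1 = 4" "row_hi 2 = 4"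
    using lo2 len2 hi2 r_ge_2 by linarith+
  moreover have "row_lo 1 = 0" "row_lo 3 = 0" "row_hi 3 = 4"
    using row_length[of 1] row_lo_nonneg[of 1] row_length[of 3] row_hi_le_first[of 3] row_lo_last
      \<open>r = 2\<close> \<open>row_hi 1 = 4\<close> by simp_all
  ultimately have rows: "row_lo k = 0" "row_hi k = 4" if "k \<in> {1, 2, 3}" for k
    using that lo2 by auto
  have "shape = {(k, c). k \<in> {1, 2, 3} \<and> 0 < c \<and> c \<le> 4}"
  proof (rule set_eqI)
    fix x :: box
    obtain k c where x: "x = (k, c)" by fastforce
    have "1 \<le> k \<and> k \<le> r + 1 \<longleftrightarrow> k \<in> {1, 2, 3}"
      using \<open>r = 2\<close> by auto
    then show "x \<in> shape \<longleftrightarrow> x \<in> {(k, c). k \<in> {1, 2, 3} \<and> 0 < c \<and> c \<le> 4}"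
      unfolding x shape_eq using rows[of k] by auto
  qed
  also have "\<dots> = rectangle_3x4"
  proof -
    have "c \<in> {1, 2, 3, 4} \<longleftrightarrow> 0 < c \<and> c \<le> 4" for c :: int
      by auto
    then show ?thesis
      unfolding rectangle_3x4_def by auto
  qed
  finally show "shape = rectangle_3x4" .
  then show "g = 12"
    using card_shape by (simp add: rectangle_3x4_def card_cartesian_product)
qed

end

theorem lemma4p4:
  fixes g r d :: nat and \<alpha> \<beta> :: "nat \<Rightarrow> nat"
  assumes "is_ram_seq r d \<alpha>" and "is_ram_seq r d \<beta>"
    and "int g - int d + int r \<ge> 0"
    and "rho g r d \<alpha> \<beta> = 0"
    and "r \<ge> 2"
    and "int (\<alpha> r) + int (\<beta> r) + int g - int d + int r > int r + 1"
  shows "\<exists>t a. 1 \<le> t \<and> t < g \<and> a > 0 \<and> pi_ta t a \<in> EH_group g \<and>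
           (\<exists>T \<in> YT g r d \<alpha> \<beta>. pi_ta t a T \<noteq> T) \<and>
           4 * card {T \<in> YT g r d \<alpha> \<beta>. pi_ta t a T \<noteq> T} \<le> card (YT g r d \<alpha> \<beta>)"
proof -
  interpret EH_shape g r d \<alpha> \<beta>
    using assms(1,2,4,5,6) by unfold_locales
  show ?thesis
  proof (cases "row2_start + 3 \<le> row_hi 1")
    case True
    then show ?thesis by (rule quarter_moving_generator_generic)
  next
    case False
    then have "shape = rectangle_3x4" and "g = 12"
      by (rule shape_is_rectangle)+
    then show ?thesis
      by (rule quarter_moving_generator_rectangle)
  qed
qed

end
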